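(* Let $\Sigma\in\mathbb{R}^{n\times n}$ be a symmetric positive definite matrix with eigenvalues $\lambda_1,\ldots,\lambda_n$, $\lambda_{\min}=\min_i\lambda_i$, $\lambda_{\mathrm{mean}}=\mathrm{tr}(\Sigma)/n$. For $0<D\le\mathrm{tr}(\Sigma)$ let $L>0$ satisfy $\sum_{i=1}^n\min\{L,\lambda_i\}=D$, $D_i=\min\{L,\lambda_i\}$, and $R(D)=\sum_{i=1}^n\frac12\log\frac{\lambda_i}{D_i}$. For $\alpha\in[0,1]$, $D>0$ let $R_\alpha(D)=\frac12\log\det\big(\alpha I+\frac{n}{D}\Sigma\big)$, and let $\alpha^*\in[0,1]$ be the unique value with $R_{\alpha^*}(\mathrm{tr}(\Sigma))=0$. Then $\lim_{D\to0^+}\big(R_{\alpha^*}(D)-R(D)\big)=0$, $R_{\alpha^*}(\mathrm{tr}(\Sigma))=R(\mathrm{tr}(\Sigma))=0$, and for every $D\in(0,\mathrm{tr}(\Sigma)]$, $$\frac12\log\frac{\lambda_{\min}}{\lambda_{\mathrm{mean}}}\le\frac{R_{\alpha^*}(D)-R(D)}{n}\le\frac12\log\Big(2-\frac{\lambda_{\min}}{\lambda_{\mathrm{mean}}}\Big).$$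
   Context: $\log$ denotes the logarithm to a fixed base greater than $1$. $R(D)$ is the mean-square-distortion rate-distortion function of an $n$-dimensional Gaussian vector with covariance $\Sigma$ (reverse water-filling); $I$ is the $n\times n$ identity matrix. *)

theory Defs
  imports "HOL-Analysis.Analysis"
begin

definition spd :: "real^'n^'n \<Rightarrow> bool" where
  "spd S \<longleftrightarrow> transpose S = S \<and> (\<forall>x. x \<noteq> 0 \<longrightarrow> x \<bullet> (S *v x) > 0)"

definition eigenvalues_of :: "real^'n^'n \<Rightarrow> ('n \<Rightarrow> real) \<Rightarrow> bool" where
  "eigenvalues_of S lam \<longleftrightarrow>
     (\<forall>x. det (x *\<^sub>R mat 1 - S) = (\<Prod>i\<in>UNIV. x - lam i))"

definition water_level :: "('n::finite \<Rightarrow> real) \<Rightarrow> real \<Rightarrow> real" where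
  "water_level lam D = (SOME L. L > 0 \<and> (\<Sum>i\<in>UNIV. min L (lam i)) = D)"

definition RD :: "real \<Rightarrow> ('n::finite \<Rightarrow> real) \<Rightarrow> real \<Rightarrow> real" where
  "RD b lam D = (\<Sum>i\<in>UNIV. 1/2 * log b (lam i / min (water_level lam D) (lam i)))"

definition R_alpha :: "real \<Rightarrow> real^'n^'n \<Rightarrow> real \<Rightarrow> real \<Rightarrow> real" where
  "R_alpha b S \<alpha> D = 1/2 * log b (det (\<alpha> *\<^sub>R mat 1 + (real CARD('n) / D) *\<^sub>R S))"

definition alpha_star :: "real \<Rightarrow> real^'n^'n \<Rightarrow> real" where
  "alpha_star b S = (THE \<alpha>. \<alpha> \<in> {0..1} \<and> R_alpha b S \<alpha> (trace S) = 0)"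

end

theory Submission
  imports Defs
begin

text \<open>With the reverse water-filling distortions D_i = min L lam_i, the gap R_alpha(D) - R(D)
  equals 1/2 * sum_i log g_i, where g_i = alpha D_i / lam_i + n D_i / D. Every g_i is at least
  lmin / lmean, because D_i / D \<ge> lmin / tr \<Sigma>; and sum_i g_i \<le> n (1 + alpha), because
  D_i \<le> lam_i and sum_i D_i = D, so by concavity of log the mean of log g_i is at most
  log (1 + alpha). The value alpha* lies in [0, 1 - lmin / lmean]: R_alpha(tr \<Sigma>) is strictly
  increasing in alpha, nonpositive at 0 by AM-GM and nonnegative at the right end point.
  For D < n lmin all D_i equal D / n, so g_i = 1 + alpha D / (n lam_i) tends to 1.\<close>

lemma det_scaleR: "det (c *\<^sub>R A) = c ^ CARD('n) * det (A :: real^'n^'n)"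
  unfolding det_def by (simp add: sum_distrib_left prod.distrib mult_ac)

lemma spd_eigenvalue_pos:
  fixes S :: "real^'n^'n"
  assumes "spd S" and "eigenvalues_of S lam"
  shows "lam i > 0"
proof -
  have "det (lam i *\<^sub>R mat 1 - S) = 0"
    using assms(2) unfolding eigenvalues_of_def by (metis UNIV_I diff_self finite prod_zero_iff)
  then have "rank (lam i *\<^sub>R mat 1 - S) \<noteq> CARD('n)"
    by (simp add: det_eq_0_rank)
  then obtain x where x: "x \<noteq> 0" "(lam i *\<^sub>R mat 1 - S) *v x = 0"
    using matrix_nonfull_linear_equations_eq by blast
  then have "S *v x = lam i *\<^sub>R x"
    by (simp add: algebra_simps flip: scaleR_matrix_vector_assoc)
  moreover have "x \<bullet> (S *v x) > 0"
    using assms(1) x(1) unfolding spd_def by blast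
  ultimately have "lam i * (x \<bullet> x) > 0"
    by simp
  moreover have "x \<bullet> x > 0"
    using x(1) by simp
  ultimately show ?thesis
    by (simp add: zero_less_mult_iff)
qed

lemma det_affine_eq_prod_eigenvalues:
  fixes S :: "real^'n^'n"
  assumes "eigenvalues_of S lam" and "c \<noteq> 0"
  shows "det (\<alpha> *\<^sub>R mat 1 + c *\<^sub>R S) = (\<Prod>i\<in>UNIV. \<alpha> + c * lam i)"
proof -
  have "\<alpha> *\<^sub>R mat 1 + c *\<^sub>R S = (- c) *\<^sub>R ((- \<alpha> / c) *\<^sub>R mat 1 - S)"
    using assms(2) by (simp add: algebra_simps)
  then have "det (\<alpha> *\<^sub>R mat 1 + c *\<^sub>R S) = (- c) ^ CARD('n) * (\<Prod>i\<in>UNIV. - \<alpha> / c - lam i)"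
    using assms(1) det_scaleR[of "- c" "(- \<alpha> / c) *\<^sub>R mat 1 - S"]
    unfolding eigenvalues_of_def by metis
  also have "\<dots> = (\<Prod>i\<in>UNIV. (- c) * (- \<alpha> / c - lam i))"
    by (simp only: prod.distrib prod_constant)
  also have "\<dots> = (\<Prod>i\<in>UNIV. \<alpha> + c * lam i)"
    using assms(2) by (simp add: algebra_simps)
  finally show ?thesis .
qed

lemma permutes_non_id_moves_other_point:
  assumes "p permutes UNIV" and "p \<noteq> id"
  obtains j where "j \<noteq> k" and "p j \<noteq> j"
proof -
  obtain j where j: "p j \<noteq> j"
    using assms(2) by (metis eq_id_iff)
  moreover have "p (p j) \<noteq> p j"
    using j permutes_inj[OF assms(1)] by (metis injD)
  ultimately show ?thesis
    using that by metis
qed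

text \<open>Jacobi's formula at the identity: only the identity permutation contributes a term
  linear in t to the Leibniz expansion.\<close>
lemma has_field_derivative_det_id_plus:
  "((\<lambda>t. det (mat 1 + t *\<^sub>R S)) has_field_derivative trace (S :: real^'n^'n)) (at 0)"
proof -
  define e where "e p i t = (if p i = i then 1 else 0) + t * S$i$(p i)" for p :: "'n \<Rightarrow> 'n" and i t
  have det_eq: "det (mat 1 + t *\<^sub>R S) =
      (\<Sum>p\<in>{p. p permutes UNIV}. of_int (sign p) * (\<Prod>i\<in>UNIV. e p i t))" for t
    by (auto simp: det_def e_def mat_def intro!: sum.cong prod.cong)
  have term_deriv: "((\<lambda>t. \<Prod>i\<in>UNIV. e p i t) has_field_derivative
      (if p = id then trace S else 0)) (at 0)" if p: "p permutes UNIV" for p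
  proof -
    have "((\<lambda>t. \<Prod>i\<in>UNIV. e p i t) has_field_derivative
        (\<Sum>k\<in>UNIV. S$k$(p k) * (\<Prod>i\<in>UNIV-{k}. e p i 0))) (at 0)"
      by (rule has_field_derivative_prod) (auto simp: e_def intro!: derivative_eq_intros)
    moreover have "(\<Sum>k\<in>UNIV. S$k$(p k) * (\<Prod>i\<in>UNIV-{k}. e p i 0)) = (if p = id then trace S else 0)"
    proof (cases "p = id")
      case True
      then show ?thesis by (simp add: e_def trace_def)
    next
      case False
      have "(\<Prod>i\<in>UNIV-{k}. e p i 0) = 0" for k
      proof -
        obtain j where "j \<noteq> k" "p j \<noteq> j"
          using permutes_non_id_moves_other_point[OF p False] .
        then show ?thesis
          by (intro prod_zero) (auto simp: e_def intro!: bexI[of _ j])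
      qed
      then show ?thesis
        using False by (simp del: prod_zero_iff)
    qed
    ultimately show ?thesis by simp
  qed
  have "((\<lambda>t. det (mat 1 + t *\<^sub>R S)) has_field_derivative
      (\<Sum>p\<in>{p. p permutes (UNIV :: 'n set)}. of_int (sign p) * (if p = id then trace S else 0))) (at 0)"
    unfolding det_eq by (intro DERIV_sum DERIV_cmult term_deriv) simp
  moreover have "(\<Sum>p\<in>{p. p permutes (UNIV :: 'n set)}. of_int (sign p) * (if p = id then trace S else 0))
      = (\<Sum>p\<in>{p. p permutes (UNIV :: 'n set)}. if p = id then trace S else 0)"
    by (intro sum.cong) auto
  ultimately show ?thesis
    by simp
qed

lemma trace_eq_sum_eigenvalues:
  fixes S :: "real^'n^'n"
  assumes "eigenvalues_of S lam"
  shows "trace S = (\<Sum>i\<in>UNIV. lam i)"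
proof -
  have "(\<lambda>t. det (mat 1 + t *\<^sub>R S)) = (\<lambda>t. \<Prod>i\<in>UNIV. 1 + t * lam i)"
  proof
    show "det (mat 1 + t *\<^sub>R S) = (\<Prod>i\<in>UNIV. 1 + t * lam i)" for t
      using det_affine_eq_prod_eigenvalues[OF assms, of t 1] by (cases "t = 0") auto
  qed
  moreover have "((\<lambda>t. \<Prod>i\<in>UNIV. 1 + t * lam i) has_field_derivative
      (\<Sum>k\<in>UNIV. lam k * (\<Prod>i\<in>UNIV-{k}. 1 + 0 * lam i))) (at 0)"
    by (rule has_field_derivative_prod) (auto intro!: derivative_eq_intros)
  ultimately have "((\<lambda>t. det (mat 1 + t *\<^sub>R S)) has_field_derivative (\<Sum>i\<in>UNIV. lam i)) (at 0)"
    by simp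
  then show ?thesis
    using DERIV_unique[OF has_field_derivative_det_id_plus] by blast
qed

definition distortion :: "('n::finite \<Rightarrow> real) \<Rightarrow> real \<Rightarrow> 'n \<Rightarrow> real" where
  "distortion lam D i = min (water_level lam D) (lam i)"

lemma card_mul_Min_range_le_sum:
  "real CARD('n) * Min (range lam) \<le> (\<Sum>i\<in>UNIV. lam (i :: 'n::finite))"
proof -
  have "(\<Sum>i\<in>(UNIV :: 'n set). Min (range lam)) \<le> (\<Sum>i\<in>UNIV. lam i)"
    by (intro sum_mono) simp
  then show ?thesis by simp
qed

lemma water_level_spec:
  fixes lam :: "'n::finite \<Rightarrow> real"
  assumes pos: "\<And>i. lam i > 0" and D: "0 < D" "D \<le> (\<Sum>i\<in>UNIV. lam i)"
  shows "water_level lam D > 0" and "(\<Sum>i\<in>UNIV. distortion lam D i) = D"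
proof -
  define f where "f L = (\<Sum>i\<in>UNIV. min L (lam i))" for L
  define M where "M = Max (range lam)"
  have M: "lam i \<le> M" for i
    unfolding M_def by (intro Max_ge) auto
  have "f 0 = 0"
    using pos by (simp add: f_def min_def less_imp_le not_le)
  moreover have "f M = (\<Sum>i\<in>UNIV. lam i)"
    unfolding f_def using M by (intro sum.cong) (auto simp: min_def intro: order.antisym)
  moreover have "0 \<le> M"
    using M[of undefined] pos[of undefined] by linarith
  moreover have "continuous_on {0..M} f"
    unfolding f_def by (intro continuous_intros)
  ultimately obtain L where "0 \<le> L" "f L = D"
    using IVT'[of f 0 D M] D by auto
  with \<open>f 0 = 0\<close> D have "\<exists>L. L > 0 \<and> (\<Sum>i\<in>UNIV. min L (lam i)) = D"
    unfolding f_def by (metis order.not_eq_order_implies_strict)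
  then have "water_level lam D > 0 \<and> (\<Sum>i\<in>UNIV. min (water_level lam D) (lam i)) = D"
    unfolding water_level_def by (rule someI_ex)
  then show "water_level lam D > 0" and "(\<Sum>i\<in>UNIV. distortion lam D i) = D"
    by (simp_all add: distortion_def)
qed

lemma distortion_pos:
  fixes lam :: "'n::finite \<Rightarrow> real"
  assumes "\<And>i. lam i > 0" and "0 < D" "D \<le> (\<Sum>i\<in>UNIV. lam i)"
  shows "distortion lam D i > 0"
  using water_level_spec(1)[OF assms] assms(1) by (simp add: distortion_def)

lemma distortion_total:
  fixes lam :: "'n::finite \<Rightarrow> real"
  assumes pos: "\<And>i. lam i > 0"
  shows "distortion lam (\<Sum>i\<in>UNIV. lam i) i = lam i"
proof (rule ccontr)
  let ?D = "\<Sum>i\<in>UNIV. lam i"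
  assume "distortion lam ?D i \<noteq> lam i"
  then have "distortion lam ?D i < lam i"
    by (simp add: distortion_def)
  then have "(\<Sum>j\<in>UNIV. distortion lam ?D j) < ?D"
    by (intro sum_strict_mono_ex1) (auto simp: distortion_def)
  moreover have "?D > 0"
    using pos by (simp add: sum_pos)
  ultimately show False
    using water_level_spec(2)[of lam, OF pos] by simp
qed

lemma distortion_below_Min:
  fixes lam :: "'n::finite \<Rightarrow> real"
  assumes pos: "\<And>i. lam i > 0" and D: "0 < D" "D < real CARD('n) * Min (range lam)"
  shows "distortion lam D i = D / real CARD('n)"
proof -
  have D_le: "D \<le> (\<Sum>i\<in>UNIV. lam i)"
    using D(2) card_mul_Min_range_le_sum[of lam] by linarith
  have "water_level lam D < Min (range lam)"
  proof (rule ccontr)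
    assume "\<not> water_level lam D < Min (range lam)"
    then have "Min (range lam) \<le> water_level lam D"
      by linarith
    then have "Min (range lam) \<le> distortion lam D j" for j
      using Min_le[of "range lam" "lam j"] by (simp add: distortion_def)
    then have "(\<Sum>j\<in>(UNIV :: 'n set). Min (range lam)) \<le> (\<Sum>j\<in>UNIV. distortion lam D j)"
      by (intro sum_mono)
    with water_level_spec(2)[OF pos D(1) D_le] D(2) show False
      by simp
  qed
  then have "distortion lam D j = water_level lam D" for j
    using Min_le[of "range lam" "lam j"] by (simp add: distortion_def)
  with water_level_spec(2)[OF pos D(1) D_le] show ?thesis
    by (simp add: field_simps)
qed

lemma Min_div_sum_le_distortion_div:
  fixes lam :: "'n::finite \<Rightarrow> real"
  assumes pos: "\<And>i. lam i > 0" and D: "0 < D" "D \<le> (\<Sum>i\<in>UNIV. lam i)"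
  shows "Min (range lam) / (\<Sum>i\<in>UNIV. lam i) \<le> distortion lam D i / D"
proof (cases "water_level lam D \<le> Min (range lam)")
  case True
  then have "distortion lam D j = water_level lam D" for j
    using Min_le[of "range lam" "lam j"] by (simp add: distortion_def)
  then have "D = real CARD('n) * water_level lam D"
    using water_level_spec(2)[of lam, OF pos D] by simp
  then have "distortion lam D i / D = 1 / real CARD('n)"
    using D(1) \<open>distortion lam D i = water_level lam D\<close> by (simp add: field_simps)
  moreover have "Min (range lam) / (\<Sum>i\<in>UNIV. lam i) \<le> 1 / real CARD('n)"
    using card_mul_Min_range_le_sum[of lam] D by (simp add: field_simps)
  ultimately show ?thesis
    by simp
next
  case False
  then have "Min (range lam) \<le> water_level lam D"
    by linarith
  then have "Min (range lam) \<le> distortion lam D i"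
    using Min_le[of "range lam" "lam i"] by (simp add: distortion_def)
  then have "Min (range lam) / (\<Sum>i\<in>UNIV. lam i) \<le> distortion lam D i / (\<Sum>i\<in>UNIV. lam i)"
    using D by (simp add: divide_right_mono)
  also have "\<dots> \<le> distortion lam D i / D"
    using D distortion_pos[OF pos D, of i] by (intro divide_left_mono) simp_all
  finally show ?thesis .
qed

lemma RD_total:
  fixes lam :: "'n::finite \<Rightarrow> real"
  assumes "\<And>i. lam i > 0"
  shows "RD b lam (\<Sum>i\<in>UNIV. lam i) = 0"
  using distortion_total[of lam, OF assms] assms
  unfolding RD_def distortion_def[symmetric] by (simp add: less_imp_neq[symmetric])

lemma sum_log_le_card_mul_log:
  fixes g :: "'n::finite \<Rightarrow> real"
  assumes b: "b > 1" and g: "\<And>i. g i > 0" and sum_le: "(\<Sum>i\<in>UNIV. g i) \<le> real CARD('n) * c"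
  shows "(\<Sum>i\<in>UNIV. log b (g i)) \<le> real CARD('n) * log b c"
proof -
  have "0 < (\<Sum>i\<in>UNIV. g i)"
    using g by (simp add: sum_pos)
  with sum_le have "0 < real CARD('n) * c"
    by linarith
  then have c: "c > 0"
    by (simp add: zero_less_mult_iff)
  have "ln (g i) \<le> ln c + (g i / c - 1)" for i
    using ln_le_minus_one[of "g i / c"] g[of i] c by (simp add: ln_div)
  then have "(\<Sum>i\<in>UNIV. ln (g i)) \<le> (\<Sum>i\<in>UNIV. ln c + (g i / c - 1))"
    by (rule sum_mono)
  also have "\<dots> = real CARD('n) * ln c + ((\<Sum>i\<in>UNIV. g i) / c - real CARD('n))"
    by (simp add: sum.distrib sum_subtractf sum_divide_distrib)
  also have "\<dots> \<le> real CARD('n) * ln c"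
    using sum_le c by (simp add: divide_le_eq mult.commute)
  finally show ?thesis
    using b by (simp add: log_def sum_divide_distrib[symmetric] divide_right_mono)
qed

definition gap_factor :: "('n::finite \<Rightarrow> real) \<Rightarrow> real \<Rightarrow> real \<Rightarrow> 'n \<Rightarrow> real" where
  "gap_factor lam \<alpha> D i = \<alpha> * distortion lam D i / lam i + real CARD('n) * distortion lam D i / D"

lemma gap_factor_ge:
  fixes lam :: "'n::finite \<Rightarrow> real"
  assumes pos: "\<And>i. lam i > 0" and "0 \<le> \<alpha>" and D: "0 < D" "D \<le> (\<Sum>i\<in>UNIV. lam i)"
  shows "real CARD('n) * Min (range lam) / (\<Sum>i\<in>UNIV. lam i) \<le> gap_factor lam \<alpha> D i"
proof -
  have "real CARD('n) * Min (range lam) / (\<Sum>i\<in>UNIV. lam i) \<le> real CARD('n) * distortion lam D i / D"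
    using mult_left_mono[OF Min_div_sum_le_distortion_div[OF pos D, of i], of "real CARD('n)"]
    by simp
  moreover have "0 \<le> \<alpha> * distortion lam D i / lam i"
    using assms(2) pos[of i] distortion_pos[OF pos D, of i] by simp
  ultimately show ?thesis
    unfolding gap_factor_def by linarith
qed

lemma sum_gap_factor_le:
  fixes lam :: "'n::finite \<Rightarrow> real"
  assumes pos: "\<And>i. lam i > 0" and "0 \<le> \<alpha>" and D: "0 < D" "D \<le> (\<Sum>i\<in>UNIV. lam i)"
  shows "(\<Sum>i\<in>UNIV. gap_factor lam \<alpha> D i) \<le> real CARD('n) * (1 + \<alpha>)"
proof -
  have "(\<Sum>i\<in>UNIV. gap_factor lam \<alpha> D i)
      = \<alpha> * (\<Sum>i\<in>UNIV. distortion lam D i / lam i) + real CARD('n) * (\<Sum>i\<in>UNIV. distortion lam D i) / D"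
    unfolding gap_factor_def by (simp add: sum.distrib sum_distrib_left sum_divide_distrib)
  also have "\<dots> = \<alpha> * (\<Sum>i\<in>UNIV. distortion lam D i / lam i) + real CARD('n)"
    using water_level_spec(2)[OF pos D] D by simp
  also have "\<dots> \<le> \<alpha> * (\<Sum>i\<in>(UNIV :: 'n set). 1) + real CARD('n)"
    using assms by (intro add_right_mono mult_left_mono sum_mono) (auto simp: distortion_def)
  finally show ?thesis
    by (simp add: algebra_simps)
qed

lemma gap_factor_tendsto_1:
  fixes lam :: "'n::finite \<Rightarrow> real"
  assumes pos: "\<And>i. lam i > 0"
  shows "((\<lambda>D. gap_factor lam \<alpha> D i) \<longlongrightarrow> 1) (at_right 0)"
proof -
  have "\<forall>\<^sub>F D in at_right 0. \<alpha> * D / (real CARD('n) * lam i) + 1 = gap_factor lam \<alpha> D i"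
    unfolding eventually_at_right_field
  proof (intro exI[of _ "real CARD('n) * Min (range lam)"] conjI allI impI)
    show "0 < real CARD('n) * Min (range lam)"
      using pos by simp
    fix D :: real
    assume D: "0 < D" "D < real CARD('n) * Min (range lam)"
    then have "distortion lam D i = D / real CARD('n)"
      using distortion_below_Min[of lam, OF pos] by blast
    then show "\<alpha> * D / (real CARD('n) * lam i) + 1 = gap_factor lam \<alpha> D i"
      unfolding gap_factor_def using pos[of i] D(1) by (simp add: field_simps)
  qed
  moreover have "((\<lambda>D. \<alpha> * D / (real CARD('n) * lam i) + 1) \<longlongrightarrow> \<alpha> * 0 / (real CARD('n) * lam i) + 1) (at_right 0)"
    using pos[of i] by (intro tendsto_intros) simp
  ultimately show ?thesis
    using Lim_transform_eventually by fastforce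
qed

lemma sum_log_gap_factor_bounds:
  fixes lam :: "'n::finite \<Rightarrow> real"
  defines "r \<equiv> real CARD('n) * Min (range lam) / (\<Sum>i\<in>UNIV. lam i)"
  assumes b: "b > 1" and pos: "\<And>i. lam i > 0" and \<alpha>: "0 \<le> \<alpha>" "\<alpha> \<le> 1 - r"
    and D: "0 < D" "D \<le> (\<Sum>i\<in>UNIV. lam i)"
  shows "real CARD('n) * log b r \<le> (\<Sum>i\<in>UNIV. log b (gap_factor lam \<alpha> D i))"
    and "(\<Sum>i\<in>UNIV. log b (gap_factor lam \<alpha> D i)) \<le> real CARD('n) * log b (2 - r)"
proof -
  have "r > 0"
    unfolding r_def using pos by (simp add: sum_pos)
  have ge: "r \<le> gap_factor lam \<alpha> D i" for i
    unfolding r_def using gap_factor_ge[OF pos \<alpha>(1) D] .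
  then have "(\<Sum>i\<in>(UNIV :: 'n set). log b r) \<le> (\<Sum>i\<in>UNIV. log b (gap_factor lam \<alpha> D i))"
    using b \<open>r > 0\<close> by (intro sum_mono) (simp add: order.strict_trans2)
  then show "real CARD('n) * log b r \<le> (\<Sum>i\<in>UNIV. log b (gap_factor lam \<alpha> D i))"
    by simp
  have "(\<Sum>i\<in>UNIV. log b (gap_factor lam \<alpha> D i)) \<le> real CARD('n) * log b (1 + \<alpha>)"
    using b ge \<open>r > 0\<close> sum_gap_factor_le[OF pos \<alpha>(1) D]
    by (intro sum_log_le_card_mul_log) (auto intro: order.strict_trans2)
  also have "\<dots> \<le> real CARD('n) * log b (2 - r)"
    using b \<alpha> by (intro mult_left_mono) auto
  finally show "(\<Sum>i\<in>UNIV. log b (gap_factor lam \<alpha> D i)) \<le> real CARD('n) * log b (2 - r)" .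
qed

lemma R_alpha_eq_sum_log:
  fixes S :: "real^'n^'n"
  assumes eig: "eigenvalues_of S lam" and pos: "\<And>i. lam i > 0" and "0 \<le> \<alpha>" "0 < D"
  shows "R_alpha b S \<alpha> D = (\<Sum>i\<in>UNIV. log b (\<alpha> + real CARD('n) / D * lam i)) / 2"
proof -
  have factor_pos: "0 < \<alpha> + real CARD('n) / D * lam i" for i
    using assms pos[of i] by (simp add: add_nonneg_pos)
  have "det (\<alpha> *\<^sub>R mat 1 + (real CARD('n) / D) *\<^sub>R S) = (\<Prod>i\<in>UNIV. \<alpha> + real CARD('n) / D * lam i)"
    using det_affine_eq_prod_eigenvalues[OF eig] \<open>0 < D\<close> by simp
  moreover have "ln (\<Prod>i\<in>UNIV. \<alpha> + real CARD('n) / D * lam i) = (\<Sum>i\<in>UNIV. ln (\<alpha> + real CARD('n) / D * lam i))"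
    using factor_pos by (intro ln_prod) (auto simp: less_imp_neq[symmetric])
  ultimately show ?thesis
    unfolding R_alpha_def log_def by (simp add: sum_divide_distrib)
qed

lemma R_alpha_minus_RD:
  fixes S :: "real^'n^'n"
  assumes eig: "eigenvalues_of S lam" and pos: "\<And>i. lam i > 0"
    and "0 \<le> \<alpha>" and D: "0 < D" "D \<le> trace S"
  shows "R_alpha b S \<alpha> D - RD b lam D = (\<Sum>i\<in>UNIV. log b (gap_factor lam \<alpha> D i)) / 2"
proof -
  have D': "D \<le> (\<Sum>i\<in>UNIV. lam i)"
    using D(2) trace_eq_sum_eigenvalues[OF eig] by simp
  have "log b (gap_factor lam \<alpha> D i)
      = log b (\<alpha> + real CARD('n) / D * lam i) - log b (lam i / distortion lam D i)" for i
  proof -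
    have "gap_factor lam \<alpha> D i = (\<alpha> + real CARD('n) / D * lam i) / (lam i / distortion lam D i)"
      unfolding gap_factor_def using pos[of i] D(1) distortion_pos[OF pos D(1) D', of i]
      by (simp add: field_simps)
    moreover have "0 < \<alpha> + real CARD('n) / D * lam i"
      using assms pos[of i] by (simp add: add_nonneg_pos)
    ultimately show ?thesis
      using pos[of i] distortion_pos[OF pos D(1) D', of i] by (simp add: log_divide_pos log_mult_pos)
  qed
  then show ?thesis
    unfolding R_alpha_eq_sum_log[OF eig pos \<open>0 \<le> \<alpha>\<close> D(1)] RD_def distortion_def[symmetric]
    by (simp add: sum_subtractf flip: sum_divide_distrib)
qed

lemma sum_log_shift_strict_mono:
  fixes \<mu> :: "'n::finite \<Rightarrow> real"
  assumes "b > 1" and "\<And>i. \<mu> i > 0"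
  shows "strict_mono_on {0..} (\<lambda>a. \<Sum>i\<in>UNIV. log b (a + \<mu> i))"
proof (rule strict_mono_onI)
  fix a a' :: real
  assume "a \<in> {0..}" "a' \<in> {0..}" "a < a'"
  then show "(\<Sum>i\<in>UNIV. log b (a + \<mu> i)) < (\<Sum>i\<in>UNIV. log b (a' + \<mu> i))"
    using assms by (intro sum_strict_mono) (auto simp: add_nonneg_pos)
qed

lemma sum_log_shift_root:
  fixes \<mu> :: "'n::finite \<Rightarrow> real"
  assumes b: "b > 1" and pos: "\<And>i. \<mu> i > 0" and sum: "(\<Sum>i\<in>UNIV. \<mu> i) = real CARD('n)"
    and r: "\<And>i. r \<le> \<mu> i"
  obtains a where "0 \<le> a" and "a \<le> 1 - r" and "(\<Sum>i\<in>UNIV. log b (a + \<mu> i)) = 0"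
proof -
  define h where "h a = (\<Sum>i\<in>UNIV. log b (a + \<mu> i))" for a
  have "(\<Sum>i\<in>(UNIV :: 'n set). r) \<le> (\<Sum>i\<in>UNIV. \<mu> i)"
    using r by (intro sum_mono)
  then have "r \<le> 1"
    using sum by simp
  have "0 \<le> log b (1 - r + \<mu> i)" for i
    using b r[of i] pos[of i] by (subst zero_le_log_cancel_iff) auto
  then have "0 \<le> h (1 - r)"
    unfolding h_def by (intro sum_nonneg)
  moreover have "h 0 \<le> real CARD('n) * log b 1"
    unfolding h_def using b pos sum by (intro sum_log_le_card_mul_log) simp_all
  moreover have "continuous_on {0..1 - r} h"
    unfolding h_def using b pos by (intro continuous_intros) (auto simp: add_nonneg_pos less_imp_neq[symmetric])
  ultimately show ?thesis
    using IVT'[of h 0 0 "1 - r"] \<open>r \<le> 1\<close> that unfolding h_def by auto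
qed

lemma alpha_star:
  fixes S :: "real^'n^'n"
  assumes b: "b > 1" and eig: "eigenvalues_of S lam" and pos: "\<And>i. lam i > 0"
  defines "r \<equiv> real CARD('n) * Min (range lam) / trace S"
  shows "0 \<le> alpha_star b S" and "alpha_star b S \<le> 1 - r"
    and "R_alpha b S (alpha_star b S) (trace S) = 0"
proof -
  define \<mu> where "\<mu> i = real CARD('n) / trace S * lam i" for i
  have tr: "trace S = (\<Sum>i\<in>UNIV. lam i)"
    using trace_eq_sum_eigenvalues[OF eig] .
  then have "trace S > 0"
    using pos by (simp add: sum_pos)
  have \<mu>_pos: "\<mu> i > 0" for i
    unfolding \<mu>_def using pos[of i] \<open>trace S > 0\<close> by simp
  have R_alpha_trace: "R_alpha b S a (trace S) = (\<Sum>i\<in>UNIV. log b (a + \<mu> i)) / 2" if "0 \<le> a" for a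
    unfolding \<mu>_def using R_alpha_eq_sum_log[OF eig pos that \<open>trace S > 0\<close>] .
  have sum_\<mu>: "(\<Sum>i\<in>UNIV. \<mu> i) = real CARD('n)"
    unfolding \<mu>_def using tr \<open>trace S > 0\<close> by (simp flip: sum_divide_distrib sum_distrib_left)
  have r_le: "r \<le> \<mu> i" for i
    unfolding r_def \<mu>_def using \<open>trace S > 0\<close> by (simp add: divide_right_mono mult_left_mono)
  obtain a0 where a0: "0 \<le> a0" "a0 \<le> 1 - r" "(\<Sum>i\<in>UNIV. log b (a0 + \<mu> i)) = 0"
    by (rule sum_log_shift_root[OF b \<mu>_pos sum_\<mu> r_le])
  have "r > 0"
    unfolding r_def using pos \<open>trace S > 0\<close> by simp
  have "alpha_star b S = a0"
    unfolding alpha_star_def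
  proof (rule the_equality)
    show "a0 \<in> {0..1} \<and> R_alpha b S a0 (trace S) = 0"
      using a0 \<open>r > 0\<close> R_alpha_trace[OF a0(1)] by simp
  next
    fix a
    assume "a \<in> {0..1} \<and> R_alpha b S a (trace S) = 0"
    then have "0 \<le> a" and "(\<Sum>i\<in>UNIV. log b (a + \<mu> i)) = 0"
      using R_alpha_trace[of a] by auto
    then show "a = a0"
      using strict_mono_on_eqD[OF sum_log_shift_strict_mono[where \<mu> = \<mu>, OF b \<mu>_pos], of a0 a] a0
      by auto
  qed
  with a0 R_alpha_trace[OF a0(1)] show "0 \<le> alpha_star b S" "alpha_star b S \<le> 1 - r"
    "R_alpha b S (alpha_star b S) (trace S) = 0"
    by auto
qed

lemma R_alpha_minus_RD_tendsto_0:
  fixes S :: "real^'n^'n"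
  assumes b: "b > 1" and eig: "eigenvalues_of S lam" and pos: "\<And>i. lam i > 0" and "0 \<le> \<alpha>"
  shows "((\<lambda>D. R_alpha b S \<alpha> D - RD b lam D) \<longlongrightarrow> 0) (at_right 0)"
proof -
  have "trace S > 0"
    using trace_eq_sum_eigenvalues[OF eig] pos by (simp add: sum_pos)
  then have "\<forall>\<^sub>F D in at_right 0. 0 < D \<and> D \<le> trace S"
    by (auto simp: eventually_at_right_field intro!: exI[of _ "trace S"])
  then have "\<forall>\<^sub>F D in at_right 0.
      (\<Sum>i\<in>UNIV. log b (gap_factor lam \<alpha> D i)) / 2 = R_alpha b S \<alpha> D - RD b lam D"
    by (rule eventually_mono) (simp add: R_alpha_minus_RD[OF eig pos \<open>0 \<le> \<alpha>\<close>])
  moreover have "((\<lambda>D. (\<Sum>i\<in>UNIV. log b (gap_factor lam \<alpha> D i)) / 2)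
      \<longlongrightarrow> (\<Sum>i\<in>(UNIV :: 'n set). log b 1) / 2) (at_right 0)"
    using b by (intro tendsto_intros gap_factor_tendsto_1 pos) auto
  ultimately show ?thesis
    by (simp add: Lim_transform_eventually)
qed

theorem theorem2:
  fixes b :: real and \<Sigma> :: "real^'n^'n" and lam :: "'n \<Rightarrow> real"
  assumes "b > 1"
    and "spd \<Sigma>"
    and "eigenvalues_of \<Sigma> lam"
  defines "lmin \<equiv> Min (range lam)"
    and "lmean \<equiv> trace \<Sigma> / real CARD('n)"
    and "a \<equiv> alpha_star b \<Sigma>"
  shows "((\<lambda>D. R_alpha b \<Sigma> a D - RD b lam D) \<longlongrightarrow> 0) (at_right 0)
       \<and> R_alpha b \<Sigma> a (trace \<Sigma>) = 0 \<and> RD b lam (trace \<Sigma>) = 0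
       \<and> (\<forall>D \<in> {0<..trace \<Sigma>}.
           1/2 * log b (lmin / lmean) \<le> (R_alpha b \<Sigma> a D - RD b lam D) / real CARD('n)
         \<and> (R_alpha b \<Sigma> a D - RD b lam D) / real CARD('n) \<le> 1/2 * log b (2 - lmin / lmean))"
proof -
  have pos: "\<And>i. lam i > 0"
    using spd_eigenvalue_pos[OF assms(2,3)] .
  have tr: "trace \<Sigma> = (\<Sum>i\<in>UNIV. lam i)"
    using trace_eq_sum_eigenvalues[OF assms(3)] .
  have ratio: "lmin / lmean = real CARD('n) * Min (range lam) / (\<Sum>i\<in>UNIV. lam i)"
    unfolding lmin_def lmean_def tr by simp
  note a = alpha_star[OF assms(1,3) pos, folded a_def, unfolded tr]
  have gap: "R_alpha b \<Sigma> a D - RD b lam D = (\<Sum>i\<in>UNIV. log b (gap_factor lam a D i)) / 2"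
    if "D \<in> {0<..trace \<Sigma>}" for D
    using R_alpha_minus_RD[OF assms(3) pos a(1)] that by simp
  have "((\<lambda>D. R_alpha b \<Sigma> a D - RD b lam D) \<longlongrightarrow> 0) (at_right 0)"
    using R_alpha_minus_RD_tendsto_0[OF assms(1,3) pos a(1)] .
  moreover have "1/2 * log b (lmin / lmean) \<le> (R_alpha b \<Sigma> a D - RD b lam D) / real CARD('n)
      \<and> (R_alpha b \<Sigma> a D - RD b lam D) / real CARD('n) \<le> 1/2 * log b (2 - lmin / lmean)"
    if D: "D \<in> {0<..trace \<Sigma>}" for D
  proof -
    have "real CARD('n) * log b (lmin / lmean) \<le> (\<Sum>i\<in>UNIV. log b (gap_factor lam a D i))"
      and "(\<Sum>i\<in>UNIV. log b (gap_factor lam a D i)) \<le> real CARD('n) * log b (2 - lmin / lmean)"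
      using sum_log_gap_factor_bounds[OF assms(1) pos a(1,2)] D tr unfolding ratio by auto
    then show ?thesis
      unfolding gap[OF D] by (simp add: field_simps)
  qed
  ultimately show ?thesis
    using a(3) RD_total[OF pos] tr by simp
qed

end
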